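(* Let $G$ be a finite $p$-group and let $C_1, C_2,\ldots,C_p$ be proper subgroups of $G$ such that $C_1\neq C_2$ and $|G:C_1|=|G:C_2|=p$. Then there exists a normal subgroup $C$ of $G$ such that $|G:C|=p$, $C\cap C_1=C\cap C_2=C_1\cap C_2$, and $C\not\subseteq C_i$ for all $1\leq i\leq p$. *)

theory Defs
  imports "HOL-Algebra.Algebra"
begin

end

theory Submission
  imports Defs
begin

text \<open>
  Subgroups of index \<open>p\<close> in a \<open>p\<close>-group are normal, so \<open>C\<^sub>1\<close> and \<open>C\<^sub>2\<close> are the kernels of
  epimorphisms \<open>f\<^sub>1, f\<^sub>2 : G \<rightarrow> \<int>/p\<close>, normalised by elements \<open>a \<in> C\<^sub>2 - C\<^sub>1\<close>, \<open>b \<in> C\<^sub>1 - C\<^sub>2\<close> with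
  \<open>f\<^sub>1 a = f\<^sub>2 b = 1\<close>. For \<open>0 < j < p\<close> the kernels \<open>D\<^sub>j\<close> of \<open>f\<^sub>1 + j f\<^sub>2\<close> are \<open>p - 1\<close> distinct normal
  subgroups of index \<open>p\<close> meeting both \<open>C\<^sub>1\<close> and \<open>C\<^sub>2\<close> in \<open>C\<^sub>1 \<inter> C\<^sub>2\<close>. A subgroup of prime index is
  maximal, so a \<open>D\<^sub>j\<close> contained in some \<open>C\<^sub>i\<close> equals it, and then \<open>i \<ge> 3\<close>; there are only
  \<open>p - 2\<close> such \<open>C\<^sub>i\<close>, so some \<open>D\<^sub>j\<close> lies in none of them.
\<close>

context group begin

lemma subgroup_nat_pow_closed:
  assumes "subgroup H G" "h \<in> H" shows "h [^] (k :: nat) \<in> H"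
  using subgroup_int_pow_closed[OF assms, of "int k"] by (simp add: int_pow_int)

lemma mem_subgroup_if_pow_coprime:
  assumes fin: "finite (carrier G)" and H: "subgroup H G" and x: "x \<in> carrier G"
    and cop: "coprime k (order G)" and xk: "x [^] k \<in> H"
  shows "x \<in> H"
proof (cases "k = 0")
  case True
  then have "order G = 1" using cop by simp
  then have "x = \<one>" using pow_order_eq_1[OF x] x by simp
  then show ?thesis using subgroup.one_closed[OF H] by simp
next
  case False
  then obtain l m where lm: "k * l = order G * m + 1"
    using bezout_nat[OF False, of "order G"] cop by auto
  have "x = (x [^] order G) [^] m \<otimes> x"
    using x by (simp add: pow_order_eq_1)
  also have "\<dots> = (x [^] k) [^] l"
    using x by (simp add: nat_pow_pow nat_pow_mult lm)
  finally show ?thesis using subgroup_nat_pow_closed[OF H xk, of l] by simp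
qed

lemma pow_notin_subgroup_of_p_group:
  assumes "finite (carrier G)" "Factorial_Ring.prime p" "order G = p ^ n" "subgroup H G"
    and "x \<in> carrier G" "x \<notin> H" "0 < k" "k < p"
  shows "x [^] k \<notin> H"
proof -
  have "coprime k p"
    using assms(2,7,8) by (metis coprime_commute prime_imp_coprime nat_dvd_not_less)
  then have "coprime k (order G)"
    using assms(3) by simp
  then show ?thesis using mem_subgroup_if_pow_coprime assms by blast
qed

lemma rcosets_eq_pow_rcosets:
  assumes fin: "finite (carrier G)" and H: "subgroup H G" and idx: "card (rcosets H) = p"
    and x: "x \<in> carrier G" and notin: "\<And>k. 0 < k \<Longrightarrow> k < p \<Longrightarrow> x [^] k \<notin> H"
  shows "rcosets H = (\<lambda>k. H #> x [^] k) ` {..<p}"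
proof (rule sym, rule card_subset_eq)
  show "finite (rcosets H)"
    using fin unfolding RCOSETS_def by simp
  show "(\<lambda>k. H #> x [^] k) ` {..<p} \<subseteq> rcosets H"
    by (intro image_subsetI rcosetsI[OF subgroup.subset[OF H]] nat_pow_closed[OF x])
  have distinct: "H #> x [^] i \<noteq> H #> x [^] j" if "i < j" "j < p" for i j
  proof
    assume "H #> x [^] i = H #> x [^] j"
    then have "x [^] j \<otimes> inv (x [^] i) \<in> H"
      using x H by (simp add: repr_independenceD subgroup.rcos_module_imp)
    moreover have "x [^] j \<otimes> inv (x [^] i) = x [^] (j - i) \<otimes> x [^] i \<otimes> inv (x [^] i)"
      using x \<open>i < j\<close> by (simp add: nat_pow_mult)
    moreover have "\<dots> = x [^] (j - i)"
      using x by (simp add: m_assoc)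
    ultimately have "x [^] (j - i) \<in> H"
      by simp
    then show False using notin[of "j - i"] that by simp
  qed
  have inj: "inj_on (\<lambda>k. H #> x [^] k) {..<p}"
  proof (rule inj_onI)
    fix i j assume "i \<in> {..<p}" "j \<in> {..<p}" "H #> x [^] i = H #> x [^] j"
    then show "i = j"
      using distinct[of i j] distinct[of j i] by (cases i j rule: linorder_cases) auto
  qed
  show "card ((\<lambda>k. H #> x [^] k) ` {..<p}) = card (rcosets H)"
    by (simp only: card_image[OF inj] idx card_lessThan)
qed

lemma conj_nat_pow:
  assumes "x \<in> carrier G" "h \<in> carrier G"
  shows "(x \<otimes> h \<otimes> inv x) [^] (k :: nat) = x \<otimes> h [^] k \<otimes> inv x"
proof (induction k)
  case (Suc k)
  then show ?case
    using assms by (simp add: m_assoc[symmetric]) (simp add: m_assoc)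
qed (use assms in simp)

lemma normal_if_index_prime_in_p_group:
  assumes fin: "finite (carrier G)" and p: "Factorial_Ring.prime p" and ord: "order G = p ^ n"
    and H: "subgroup H G" and idx: "card (rcosets H) = p"
  shows "H \<lhd> G"
  unfolding normal_inv_iff
proof (intro conjI H ballI)
  fix x h assume x: "x \<in> carrier G" and h: "h \<in> H"
  have hG: "h \<in> carrier G" using subgroup.mem_carrier[OF H h] .
  show "x \<otimes> h \<otimes> inv x \<in> H"
  proof (rule ccontr)
    define w where "w = x \<otimes> h \<otimes> inv x"
    assume "x \<otimes> h \<otimes> inv x \<notin> H"
    then have w: "w \<in> carrier G" "w \<notin> H" using x hG by (simp_all add: w_def)
    (* The cosets H w^k exhaust G/H, so H x^-1 = H w^k for some k; then x h^k = w^k x lies in H,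
       hence so do x and w. *)
    have "H #> inv x \<in> rcosets H"
      using x by (intro rcosetsI subgroup.subset[OF H]) simp
    then obtain k :: nat where "H #> inv x = H #> w [^] k"
      using rcosets_eq_pow_rcosets[OF fin H idx w(1)]
        pow_notin_subgroup_of_p_group[OF fin p ord H w] by blast
    then have "inv x \<otimes> inv (w [^] k) \<in> H"
      using x w H by (simp add: repr_independenceD subgroup.rcos_module_imp)
    then have "inv (inv x \<otimes> inv (w [^] k)) \<in> H"
      by (rule subgroup.m_inv_closed[OF H])
    also have "inv (inv x \<otimes> inv (w [^] k)) = w [^] k \<otimes> x"
      using x w by (simp add: inv_mult_group)
    also have "\<dots> = x \<otimes> h [^] k \<otimes> inv x \<otimes> x"
      unfolding w_def using x hG by (simp only: conj_nat_pow)
    also have "\<dots> = x \<otimes> h [^] k"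
      using x hG by (simp add: m_assoc)
    finally have "x \<otimes> h [^] k \<in> H" .
    then have "x \<otimes> h [^] k \<otimes> inv (h [^] k) \<in> H"
      by (rule subgroup.m_closed[OF H _ subgroup.m_inv_closed[OF H subgroup_nat_pow_closed[OF H h]]])
    moreover have "x \<otimes> h [^] k \<otimes> inv (h [^] k) = x"
      using x hG by (simp add: m_assoc)
    ultimately have "x \<in> H" by simp
    then have "w \<in> H"
      unfolding w_def using h by (intro subgroup.m_closed[OF H] subgroup.m_inv_closed[OF H])
    with w show False by simp
  qed
qed

lemma index_prime_subgroup_maximal:
  assumes fin: "finite (carrier G)" and p: "Factorial_Ring.prime p"
    and K: "subgroup K G" "card (rcosets K) = p"
    and L: "subgroup L G" "K \<subseteq> L" "L \<noteq> carrier G"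
  shows "K = L"
proof -
  have finL: "finite L" using fin subgroup.subset[OF L(1)] finite_subset by blast
  have "card K > 0"
    using fin subgroup.subset[OF K(1)] subgroup.one_closed[OF K(1)] card_gt_0_iff finite_subset
    by blast
  have "card (rcosets\<^bsub>G\<lparr>carrier := L\<rparr>\<^esub> K) * card K = card L"
    using group.lagrange[OF subgroup_imp_group[OF L(1)] subgroup_incl[OF K(1) L(1,2)]]
    by (simp add: order_def)
  then obtain m where m: "card L = m * card K" by metis
  have "p * card K = card (rcosets L) * m * card K"
    using lagrange[OF K(1)] lagrange[OF L(1)] K(2) m by (simp add: mult.assoc)
  then have idx: "card (rcosets L) * m = p" using \<open>card K > 0\<close> by simp
  have "card (rcosets L) \<noteq> 1"
  proof
    assume "card (rcosets L) = 1"
    then have "card L = card (carrier G)" using lagrange[OF L(1)] by (simp add: order_def)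
    then show False using L(3) card_subset_eq[OF fin subgroup.subset[OF L(1)]] by simp
  qed
  moreover have "card (rcosets L) dvd p" using idx by (metis dvd_triv_left)
  ultimately have "card (rcosets L) = p" using p prime_nat_iff by blast
  then have "m = 1" using idx prime_gt_0_nat[OF p] by simp
  then have "card K = card L" using m by simp
  then show ?thesis using card_subset_eq[OF finL L(2)] by simp
qed

lemma iso_integer_mod_group_if_prime_order:
  assumes p: "Factorial_Ring.prime (order G)" and a: "a \<in> carrier G" "a \<noteq> \<one>"
  shows "\<exists>\<phi> \<in> iso G (integer_mod_group (order G)). \<phi> a = 1"
proof -
  let ?p = "order G" and ?Z = "integer_mod_group (order G)"
  have p1: "1 < ?p" using p by (rule prime_gt_1_nat)
  have fin: "finite (carrier G)" using p1 order_gt_0_iff_finite by auto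
  have "ord a dvd ?p" "ord a \<noteq> 1"
    using a ord_dvd_group_order ord_eq_1 by auto
  then have ord: "ord a = ?p" using p prime_nat_iff by blast
  define \<psi> where "\<psi> = (\<lambda>k::int. a [^] k)"
  have Z: "carrier ?Z = {0..<int ?p}" using p1 by (simp add: carrier_integer_mod_group)
  have "\<psi> \<in> hom ?Z G"
  proof (rule homI)
    fix k l assume "k \<in> carrier ?Z" "l \<in> carrier ?Z"
    have "int ?p dvd (k + l) - (k + l) mod int ?p"
      by (simp add: minus_mod_eq_mult_div)
    then have "a [^] ((k + l) mod int ?p) = a [^] (k + l)"
      using a ord by (simp add: int_pow_eq)
    then show "\<psi> (k \<otimes>\<^bsub>?Z\<^esub> l) = \<psi> k \<otimes> \<psi> l"
      using a by (simp add: \<psi>_def int_pow_mult)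
  qed (use a in \<open>simp add: \<psi>_def\<close>)
  moreover have inj: "inj_on \<psi> (carrier ?Z)"
  proof (rule inj_onI)
    fix k l assume "k \<in> carrier ?Z" "l \<in> carrier ?Z" "\<psi> k = \<psi> l"
    then have "l mod int ?p = k mod int ?p"
      using a ord by (simp add: \<psi>_def int_pow_eq mod_eq_dvd_iff)
    then show "k = l" using \<open>k \<in> carrier ?Z\<close> \<open>l \<in> carrier ?Z\<close> Z by simp
  qed
  moreover have "\<psi> ` carrier ?Z = carrier G"
  proof (rule card_subset_eq[OF fin])
    show "\<psi> ` carrier ?Z \<subseteq> carrier G" using a by (auto simp: \<psi>_def)
    show "card (\<psi> ` carrier ?Z) = card (carrier G)"
      using card_image[OF inj] Z by (simp add: order_def)
  qed
  ultimately have "\<psi> \<in> iso ?Z G" by (simp add: iso_def bij_betw_def)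
  then have "inv_into (carrier ?Z) \<psi> \<in> iso G ?Z"
    by (rule group.iso_set_sym[OF group_integer_mod_group])
  moreover have "inv_into (carrier ?Z) \<psi> a = 1"
    using inv_into_f_f[OF inj, of 1] a p1 by (simp add: \<psi>_def Z)
  ultimately show ?thesis by blast
qed

lemma ex_hom_integer_mod_group_with_kernel:
  assumes H: "H \<lhd> G" and p: "Factorial_Ring.prime p" and idx: "card (rcosets H) = p"
    and a: "a \<in> carrier G" "a \<notin> H"
  shows "\<exists>f \<in> hom G (integer_mod_group p). kernel G (integer_mod_group p) f = H \<and> f a = 1"
proof -
  let ?Q = "G Mod H" and ?Z = "integer_mod_group p"
  have sub: "subgroup H G" using H by (rule normal_imp_subgroup)
  interpret Q: group ?Q using H by (rule normal.factorgroup_is_group)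
  have coset_eq_H: "H #> g = H \<longleftrightarrow> g \<in> H" if "g \<in> carrier G" for g
    using that sub by (metis coset_join2 rcos_self)
  have coset_in_Q: "H #> g \<in> carrier ?Q" if "g \<in> carrier G" for g
    using rcosetsI[OF subgroup.subset[OF sub] that] by (simp add: FactGroup_def)
  have "order ?Q = p" using idx by (simp add: order_def FactGroup_def)
  moreover have "H #> a \<noteq> \<one>\<^bsub>?Q\<^esub>"
    using a coset_eq_H by (simp add: FactGroup_def)
  ultimately obtain \<phi> where \<phi>: "\<phi> \<in> iso ?Q ?Z" "\<phi> (H #> a) = 1"
    using p a(1) coset_in_Q Q.iso_integer_mod_group_if_prime_order by metis
  define f where "f = \<phi> \<circ> (\<lambda>g. H #> g)"
  have hom: "f \<in> hom G ?Z"
    unfolding f_def using normal.r_coset_hom_Mod[OF H] \<phi>(1)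
    by (auto intro: Group.hom_compose simp: iso_def)
  have "f g = 0 \<longleftrightarrow> g \<in> H" if g: "g \<in> carrier G" for g
  proof -
    have "\<phi> H = 0"
      using hom_one[of \<phi> ?Q ?Z] \<phi>(1) Q.is_group by (simp add: iso_def FactGroup_def)
    moreover have "inj_on \<phi> (carrier ?Q)"
      using \<phi>(1) by (simp add: iso_def bij_betw_def)
    ultimately have "f g = 0 \<longleftrightarrow> H #> g = H"
      using inj_on_eq_iff[of \<phi> "carrier ?Q" "H #> g" H] coset_in_Q[OF g] Q.one_closed
      by (simp add: f_def FactGroup_def)
    then show ?thesis using coset_eq_H[OF g] by simp
  qed
  then have "kernel G ?Z f = H"
    using subgroup.subset[OF sub] by (auto simp: kernel_def)
  moreover have "f a = 1" using \<phi>(2) by (simp add: f_def)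
  ultimately show ?thesis using hom by blast
qed

end

lemma (in group_hom) card_rcosets_kernel:
  assumes "h ` carrier G = carrier H"
  shows "card (rcosets (kernel G H h)) = order H"
  using iso_same_card[OF FactGroup_iso[OF assms]] by (simp add: FactGroup_def order_def)

locale kernel_pencil =
  F1: group_hom G "integer_mod_group p" f1 + F2: group_hom G "integer_mod_group p" f2
  for G (structure) and p :: nat and f1 f2 :: "'a \<Rightarrow> int" +
  fixes a b :: 'a
  assumes prime: "Factorial_Ring.prime p"
    and a: "a \<in> carrier G" "f1 a = 1" "f2 a = 0"
    and b: "b \<in> carrier G" "f1 b = 0" "f2 b = 1"
begin

abbreviation ker :: "('a \<Rightarrow> int) \<Rightarrow> 'a set" where
  "ker f \<equiv> kernel G (integer_mod_group p) f"

definition comb :: "nat \<Rightarrow> 'a \<Rightarrow> int" where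
  "comb j x = (f1 x + int j * f2 x) mod int p"

lemma p_gt_1: "1 < p"
  using prime by (rule prime_gt_1_nat)

lemma carrier_Z: "carrier (integer_mod_group p) = {0..<int p}"
  using p_gt_1 by (simp add: carrier_integer_mod_group)

lemma f1_range: "x \<in> carrier G \<Longrightarrow> 0 \<le> f1 x \<and> f1 x < int p"
  and f2_range: "x \<in> carrier G \<Longrightarrow> 0 \<le> f2 x \<and> f2 x < int p"
  using F1.hom_closed F2.hom_closed carrier_Z by auto

lemma comb_hom: "group_hom G (integer_mod_group p) (comb j)"
proof -
  have "comb j \<in> hom G (integer_mod_group p)"
  proof (rule homI)
    fix x y assume xy: "x \<in> carrier G" "y \<in> carrier G"
    have "comb j (x \<otimes> y) = ((f1 x + f1 y) mod int p + int j * ((f2 x + f2 y) mod int p)) mod int p"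
      using xy by (simp only: comb_def F1.hom_mult F2.hom_mult mult_integer_mod_group)
    also have "\<dots> = (f1 x + f1 y + int j * (f2 x + f2 y)) mod int p"
      by (metis mod_add_left_eq mod_add_right_eq mod_mult_right_eq)
    also have "\<dots> = ((f1 x + int j * f2 x) + (f1 y + int j * f2 y)) mod int p"
      by (simp add: algebra_simps)
    also have "\<dots> = comb j x \<otimes>\<^bsub>integer_mod_group p\<^esub> comb j y"
      by (simp add: comb_def mod_add_eq)
    finally show "comb j (x \<otimes> y) = comb j x \<otimes>\<^bsub>integer_mod_group p\<^esub> comb j y" .
  qed (use p_gt_1 carrier_Z in \<open>simp add: comb_def\<close>)
  then show ?thesis
    by (simp add: group_hom_def group_hom_axioms_def)
qed

lemma comb_nat_pow_a: "r < p \<Longrightarrow> comb j (a [^] r) = int r"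
  using a by (simp add: comb_def F1.hom_nat_pow F2.hom_nat_pow)

lemma card_rcosets_kernel_comb: "card (rcosets (ker (comb j))) = p"
proof -
  have "comb j ` carrier G = carrier (integer_mod_group p)"
  proof
    show "comb j ` carrier G \<subseteq> carrier (integer_mod_group p)"
      using group_hom.hom_closed[OF comb_hom] by blast
    show "carrier (integer_mod_group p) \<subseteq> comb j ` carrier G"
    proof
      fix r assume "r \<in> carrier (integer_mod_group p)"
      then obtain n where "r = int n" "n < p"
        using carrier_Z by (metis atLeastLessThan_iff nonneg_int_cases of_nat_less_iff)
      then have "r = comb j (a [^] n)" by (simp add: comb_nat_pow_a)
      then show "r \<in> comb j ` carrier G" using a(1) by blast
    qed
  qed
  then show ?thesis
    using group_hom.card_rcosets_kernel[OF comb_hom] carrier_Z by (simp add: order_def)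
qed

lemma kernel_comb_Int_kernel_f1:
  assumes "0 < j" "j < p"
  shows "ker (comb j) \<inter> ker f1 = ker f1 \<inter> ker f2"
proof -
  have "comb j x = 0 \<longleftrightarrow> f2 x = 0" if "x \<in> carrier G" "f1 x = 0" for x
  proof -
    have "\<not> int p dvd int j" using assms by (simp add: nat_dvd_not_less)
    then have "int p dvd int j * f2 x \<longleftrightarrow> int p dvd f2 x"
      using prime by (simp add: prime_dvd_mult_iff)
    also have "\<dots> \<longleftrightarrow> f2 x = 0"
      using f2_range[OF that(1)] by (auto dest: zdvd_imp_le simp: le_less)
    finally show ?thesis using that by (simp add: comb_def mod_eq_0_iff_dvd)
  qed
  then show ?thesis by (auto simp: kernel_def)
qed

lemma kernel_comb_Int_kernel_f2:
  "ker (comb j) \<inter> ker f2 = ker f1 \<inter> ker f2"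
proof -
  have "comb j x = f1 x" if "x \<in> carrier G" "f2 x = 0" for x
    using f1_range[OF that(1)] that(2) by (simp add: comb_def)
  then show ?thesis by (auto simp: kernel_def)
qed

lemma kernel_comb_neq_kernels:
  assumes "0 < j" "j < p"
  shows "ker (comb j) \<noteq> ker f1" and "ker (comb j) \<noteq> ker f2"
proof -
  have "comb j b = int j" "comb j a = 1"
    using assms a b p_gt_1 by (simp_all add: comb_def)
  then have "b \<notin> ker (comb j)" "a \<notin> ker (comb j)"
    using assms by (simp_all add: kernel_def)
  moreover have "b \<in> ker f1" "a \<in> ker f2"
    using a b by (simp_all add: kernel_def)
  ultimately show "ker (comb j) \<noteq> ker f1" and "ker (comb j) \<noteq> ker f2"
    by blast+
qed

lemma inj_on_kernel_comb: "inj_on (\<lambda>j. ker (comb j)) {..<p}"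
proof (rule inj_onI)
  fix j k assume j: "j \<in> {..<p}" and k: "k \<in> {..<p}"
    and eq: "ker (comb j) = ker (comb k)"
  define x where "x = inv (a [^] j) \<otimes> b"
  have x: "x \<in> carrier G" using a b by (simp add: x_def)
  have comb_x: "comb i x = (int i - int j) mod int p" for i
    using a b j carrier_Z p_gt_1
    by (simp add: x_def comb_def F1.hom_nat_pow F2.hom_nat_pow mod_simps)
  have "comb j x = 0" by (simp add: comb_x)
  then have "comb k x = 0" using eq x by (auto simp: kernel_def)
  then have "int k mod int p = int j mod int p"
    by (simp add: comb_x mod_eq_dvd_iff mod_eq_0_iff_dvd)
  then show "j = k" using j k by simp
qed

end

lemma (in group) ex_kernel_pencil:
  assumes fin: "finite (carrier G)" and p: "Factorial_Ring.prime p" and ord: "order G = p ^ n"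
    and H1: "subgroup H1 G" "card (rcosets H1) = p"
    and H2: "subgroup H2 G" "card (rcosets H2) = p"
    and "H1 \<noteq> H2"
  shows "\<exists>f1 f2 a b. kernel_pencil G p f1 f2 a b
           \<and> kernel G (integer_mod_group p) f1 = H1 \<and> kernel G (integer_mod_group p) f2 = H2"
proof -
  have proper: "H \<noteq> carrier G" if "card (rcosets H) = p" for H
  proof
    assume "H = carrier G"
    moreover have "order G > 0" using fin by (simp add: order_gt_0_iff_finite)
    ultimately have "card (rcosets H) = 1"
      using lagrange[OF subgroup_self] by (simp add: order_def)
    then show False using that prime_gt_1_nat[OF p] by simp
  qed
  have "\<not> H2 \<subseteq> H1"
    using index_prime_subgroup_maximal[OF fin p H2 H1(1) _ proper[OF H1(2)]] \<open>H1 \<noteq> H2\<close> by blast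
  then obtain a where a: "a \<in> H2" "a \<notin> H1" by blast
  have "\<not> H1 \<subseteq> H2"
    using index_prime_subgroup_maximal[OF fin p H1 H2(1) _ proper[OF H2(2)]] \<open>H1 \<noteq> H2\<close> by blast
  then obtain b where b: "b \<in> H1" "b \<notin> H2" by blast
  have aG: "a \<in> carrier G" and bG: "b \<in> carrier G"
    using subgroup.mem_carrier[OF H2(1) a(1)] subgroup.mem_carrier[OF H1(1) b(1)] .
  obtain f1 where f1: "f1 \<in> hom G (integer_mod_group p)"
      "kernel G (integer_mod_group p) f1 = H1" "f1 a = 1"
    using ex_hom_integer_mod_group_with_kernel[OF normal_if_index_prime_in_p_group[OF fin p ord H1]
        p H1(2) aG a(2)]
    by blast
  obtain f2 where f2: "f2 \<in> hom G (integer_mod_group p)"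
      "kernel G (integer_mod_group p) f2 = H2" "f2 b = 1"
    using ex_hom_integer_mod_group_with_kernel[OF normal_if_index_prime_in_p_group[OF fin p ord H2]
        p H2(2) bG b(2)]
    by blast
  have "b \<in> kernel G (integer_mod_group p) f1" "a \<in> kernel G (integer_mod_group p) f2"
    using f1(2) f2(2) a(1) b(1) by simp_all
  then have "f1 b = 0" "f2 a = 0" by (simp_all add: kernel_def)
  moreover have "group_hom G (integer_mod_group p) f" if "f \<in> hom G (integer_mod_group p)" for f
    using that is_group by (simp add: group_hom_def group_hom_axioms_def)
  ultimately have "kernel_pencil G p f1 f2 a b"
    using f1 f2 aG bG p by (intro kernel_pencil.intro kernel_pencil_axioms.intro) simp_all
  then show ?thesis using f1(2) f2(2) by blast
qed

lemma ex_not_subset_of_inj_family: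
  fixes D C :: "nat \<Rightarrow> 'a set"
  assumes "2 \<le> p" and inj: "inj_on D {1..<p}"
    and max: "\<And>i j. j \<in> {1..<p} \<Longrightarrow> i \<in> {1..p} \<Longrightarrow> D j \<subseteq> C i \<Longrightarrow> D j = C i"
    and ne: "\<And>j. j \<in> {1..<p} \<Longrightarrow> D j \<noteq> C 1 \<and> D j \<noteq> C 2"
  shows "\<exists>j\<in>{1..<p}. \<forall>i\<in>{1..p}. \<not> D j \<subseteq> C i"
proof (rule ccontr)
  assume contra: "\<not> ?thesis"
  have "D ` {1..<p} \<subseteq> C ` {3..p}"
  proof
    fix S assume "S \<in> D ` {1..<p}"
    then obtain j where j: "j \<in> {1..<p}" "S = D j" by blast
    then obtain i where i: "i \<in> {1..p}" "D j \<subseteq> C i" using contra by blast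
    then have "D j = C i" using max j(1) by blast
    then have "i \<in> {3..p}" using ne[OF j(1)] i(1) by (cases "i = 1 \<or> i = 2") auto
    then show "S \<in> C ` {3..p}" using j(2) \<open>D j = C i\<close> by blast
  qed
  then have "card (D ` {1..<p}) \<le> card (C ` {3..p})" by (simp add: card_mono)
  also have "\<dots> \<le> card {3..p}" by (rule card_image_le) simp
  finally have "card (D ` {1..<p}) \<le> card {3..p}" .
  then show False using card_image[OF inj] \<open>2 \<le> p\<close> by simp
qed

theorem lemma4:
  fixes G (structure) and p :: nat and n :: nat and C :: "nat \<Rightarrow> 'a set"
  assumes "group G" and "finite (carrier G)" and "Factorial_Ring.prime p"
    and "order G = p ^ n"
    and "\<And>i. i \<in> {1..p} \<Longrightarrow> subgroup (C i) G \<and> C i \<subset> carrier G"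
    and "C 1 \<noteq> C 2"
    and "card (rcosets (C 1)) = p" and "card (rcosets (C 2)) = p"
  shows "\<exists>D. D \<lhd> G \<and> card (rcosets D) = p
           \<and> D \<inter> C 1 = C 1 \<inter> C 2 \<and> D \<inter> C 2 = C 1 \<inter> C 2
           \<and> (\<forall>i\<in>{1..p}. \<not> D \<subseteq> C i)"
proof -
  interpret group G by fact
  note fin = assms(2) and p = assms(3)
  have p2: "2 \<le> p" using prime_ge_2_nat[OF p] .
  have C: "subgroup (C i) G" "C i \<noteq> carrier G" if "i \<in> {1..p}" for i
    using assms(5)[OF that] by auto
  have "1 \<in> {1..p}" "2 \<in> {1..p}" using p2 by auto
  then obtain f1 f2 a b where "kernel_pencil G p f1 f2 a b"
    and ker_eq: "kernel G (integer_mod_group p) f1 = C 1" "kernel G (integer_mod_group p) f2 = C 2"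
    using ex_kernel_pencil[OF fin p assms(4) C(1) assms(7) C(1) assms(8,6)] by blast
  then interpret kernel_pencil G p f1 f2 a b by simp
  let ?D = "\<lambda>j. ker (comb j)"
  have "\<exists>j\<in>{1..<p}. \<forall>i\<in>{1..p}. \<not> ?D j \<subseteq> C i"
  proof (rule ex_not_subset_of_inj_family[OF p2])
    show "inj_on ?D {1..<p}" using inj_on_kernel_comb by (rule inj_on_subset) auto
    show "?D j = C i" if "j \<in> {1..<p}" "i \<in> {1..p}" "?D j \<subseteq> C i" for i j
      using index_prime_subgroup_maximal[OF fin p group_hom.subgroup_kernel[OF comb_hom]
          card_rcosets_kernel_comb C(1)[OF that(2)] that(3) C(2)[OF that(2)]] .
    show "?D j \<noteq> C 1 \<and> ?D j \<noteq> C 2" if "j \<in> {1..<p}" for j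
      using kernel_comb_neq_kernels that ker_eq by auto
  qed
  then obtain j where j: "j \<in> {1..<p}" "\<forall>i\<in>{1..p}. \<not> ?D j \<subseteq> C i" by blast
  then show ?thesis
    using group_hom.normal_kernel[OF comb_hom] card_rcosets_kernel_comb
      kernel_comb_Int_kernel_f1[of j] kernel_comb_Int_kernel_f2[of j] ker_eq
    by (intro exI[of _ "?D j"]) auto
qed

end
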